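(* Let $M\in M_n(\mathbb{Z})$ and let $\mu$ be an integer such that $M$ is $\mu$-collapsed. Then $|\mu|\le\|M\|+\sqrt2$. If moreover no column vector of $M-\mu\,\mathrm{Id}$ equals a vector $E_{ij}=e_i-e_j$ with $i\neq j$, then $|\mu|\le\|M\|+1$.
   Context: For $M\in M_n(\mathbb{Z})$, $\mathrm{Im}(M)$ is the $\mathbb{Z}$-span of its columns; $M$ is spread if the quotient map $\mathbb{Z}^n\to\mathbb{Z}^n/\mathrm{Im}(M)$ is injective on the standard basis $\{e_1,\dots,e_n\}$, and $M$ is $\mu$-collapsed if $M-\mu\,\mathrm{Id}$ is not spread. $\|M\|$ denotes the operator norm $\max_{\|v\|=1}\|Mv\|$ with respect to the Euclidean norm. *)

theory Defs
  imports "HOL-Analysis.Analysis"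
begin

text \<open>Integer n x n matrices are rendered as int^'n^'n with a finite index type 'n.
  Im(M): the Z-span of the columns of M, i.e. all integer combinations M *v x.\<close>
definition int_image :: "int^'n^'n \<Rightarrow> (int^'n) set" where
  "int_image M = {M *v x | x. True}"

definition spread :: "int^'n^'n \<Rightarrow> bool" where
  "spread M \<longleftrightarrow>
     inj_on (\<lambda>v::int^'n. {v + y | y. y \<in> int_image M}) {axis i 1 | i. True}"

definition collapsed :: "int \<Rightarrow> int^'n^'n \<Rightarrow> bool" where
  "collapsed \<mu> M \<longleftrightarrow> \<not> spread (M - mat \<mu>)"

definition real_mat :: "int^'n^'n \<Rightarrow> real^'n^'n" where
  "real_mat M = (\<chi> i j. real_of_int (M$i$j))"

definition op_norm :: "int^'n^'n \<Rightarrow> real" where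
  "op_norm M = onorm (\<lambda>v. real_mat M *v v)"

end

theory Submission
  imports Defs
begin

text \<open>If \<open>M - \<mu> Id\<close> identifies the cosets of \<open>e\<^sub>i\<close> and \<open>e\<^sub>j\<close>, then \<open>(M - \<mu> Id) x = e\<^sub>i - e\<^sub>j\<close>
  for some integer vector \<open>x \<noteq> 0\<close>. Over the reals this reads \<open>M x = \<mu> x + (e\<^sub>i - e\<^sub>j)\<close>, so
  \<open>|\<mu>| \<parallel>x\<parallel> \<le> \<parallel>M\<parallel> \<parallel>x\<parallel> + \<surd>2\<close>. A nonzero integer vector has \<open>\<parallel>x\<parallel> \<ge> 1\<close>, and even
  \<open>\<parallel>x\<parallel> \<ge> \<surd>2\<close> unless \<open>x = \<plusminus>e\<^sub>k\<close>; in the latter case \<open>\<plusminus>\<close>(column \<open>k\<close> of \<open>M - \<mu> Id\<close>)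
  would be \<open>e\<^sub>i - e\<^sub>j\<close>, which the second hypothesis excludes.\<close>

lemma axis_diff_in_image_if_not_spread:
  fixes A :: "int^'n^'n"
  assumes "\<not> spread A"
  obtains i j where "i \<noteq> j" "axis i 1 - axis j 1 \<in> int_image A"
proof -
  obtain i j where "axis i 1 \<noteq> (axis j 1 :: int^'n)"
    and cosets_eq: "{axis i 1 + y | y. y \<in> int_image A} = {axis j 1 + y | y. y \<in> int_image A}"
    using assms unfolding spread_def inj_on_def by blast
  then have "i \<noteq> j" by blast
  have "axis i 1 \<in> {axis i 1 + y | y. y \<in> int_image A}"
    by (auto simp: int_image_def intro!: exI[of _ 0])
  then obtain y where "y \<in> int_image A" "axis i 1 = axis j 1 + y"
    using cosets_eq by auto
  then have "axis i 1 - axis j 1 \<in> int_image A"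
    by (simp add: algebra_simps)
  with \<open>i \<noteq> j\<close> show thesis using that by blast
qed

lemma collapsed_obtains_preimage_of_axis_diff:
  fixes M :: "int^'n^'n"
  assumes "collapsed \<mu> M"
  obtains i j x where "i \<noteq> j" "x \<noteq> 0" "(M - mat \<mu>) *v x = axis i 1 - axis j 1"
proof -
  obtain i j where "i \<noteq> j" "axis i 1 - axis j 1 \<in> int_image (M - mat \<mu>)"
    using assms axis_diff_in_image_if_not_spread unfolding collapsed_def by metis
  then obtain x where Ax: "(M - mat \<mu>) *v x = axis i 1 - axis j 1"
    unfolding int_image_def by auto
  have "x \<noteq> 0"
  proof
    assume "x = 0"
    with Ax have "(axis i 1 - axis j 1 :: int^'n) $ i = 0" by simp
    with \<open>i \<noteq> j\<close> show False by (simp add: axis_def)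
  qed
  with \<open>i \<noteq> j\<close> Ax show thesis using that by blast
qed

lemma matrix_vector_mult_axis:
  fixes A :: "'a::comm_semiring_1^'n^'m"
  shows "A *v axis k c = c *s column k A"
  by (simp add: vec_eq_iff matrix_vector_mult_def column_def axis_def mult.commute
      if_distrib[of "\<lambda>t. _ * t"] cong: if_cong)

lemma column_eq_axis_diff_if_mult_unit:
  fixes A :: "'a::comm_ring_1^'n^'m"
  assumes "A *v x = axis i 1 - axis j 1" "x = axis k 1 \<or> x = axis k (-1)"
  shows "column k A = axis i 1 - axis j 1 \<or> column k A = axis j 1 - axis i 1"
  using assms(2)
proof
  assume "x = axis k 1"
  then show ?thesis
    using assms(1) by (simp add: matrix_vector_mult_axis)
next
  assume "x = axis k (-1)"
  then have "- column k A = axis i 1 - axis j 1"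
    using assms(1) by (simp add: matrix_vector_mult_axis vector_smult_lneg)
  then show ?thesis
    by (metis minus_diff_eq minus_minus)
qed

lemma mat_mult_vector: "mat c *v x = c *s (x :: 'a::comm_semiring_1^'n)"
  by (simp add: vec_eq_iff mat_def matrix_vector_mult_def
      if_distrib[of "\<lambda>t. t * _"] cong: if_cong)

lemma int_power2_ge_1: "(a::int) \<noteq> 0 \<Longrightarrow> 1 \<le> a\<^sup>2"
  using zero_less_power2[of a] by linarith

lemma sum_power2_ge_1:
  fixes x :: "int^'n"
  assumes "x \<noteq> 0"
  shows "1 \<le> (\<Sum>k\<in>UNIV. (x$k)\<^sup>2)"
proof -
  obtain k where "x$k \<noteq> 0" using assms by (auto simp: vec_eq_iff)
  then have "1 \<le> (x$k)\<^sup>2" by (rule int_power2_ge_1)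
  also have "\<dots> \<le> (\<Sum>k\<in>UNIV. (x$k)\<^sup>2)"
    by (rule member_le_sum) auto
  finally show ?thesis .
qed

lemma sum_power2_ge_2:
  fixes x :: "int^'n"
  assumes "x \<noteq> 0" and not_unit: "\<And>k. x \<noteq> axis k 1 \<and> x \<noteq> axis k (-1)"
  shows "2 \<le> (\<Sum>k\<in>UNIV. (x$k)\<^sup>2)"
proof -
  obtain k where "x$k \<noteq> 0" using assms by (auto simp: vec_eq_iff)
  show ?thesis
  proof (cases "\<exists>l. l \<noteq> k \<and> x$l \<noteq> 0")
    case True
    then obtain l where "l \<noteq> k" "x$l \<noteq> 0" by blast
    have "2 \<le> (x$k)\<^sup>2 + (x$l)\<^sup>2"
      using int_power2_ge_1[OF \<open>x$k \<noteq> 0\<close>] int_power2_ge_1[OF \<open>x$l \<noteq> 0\<close>] by linarith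
    also have "\<dots> = (\<Sum>k\<in>{k, l}. (x$k)\<^sup>2)"
      using \<open>l \<noteq> k\<close> by simp
    also have "\<dots> \<le> (\<Sum>k\<in>UNIV. (x$k)\<^sup>2)"
      by (rule sum_mono2) auto
    finally show ?thesis .
  next
    case False
    then have "x = axis k (x$k)"
      by (auto simp: vec_eq_iff axis_def)
    with not_unit[of k] have "x$k \<noteq> 1" "x$k \<noteq> -1"
      by auto
    with \<open>x$k \<noteq> 0\<close> have "\<bar>2\<bar> \<le> \<bar>x$k\<bar>"
      by linarith
    then have "2\<^sup>2 \<le> (x$k)\<^sup>2"
      by (simp only: abs_le_square_iff)
    then have "2 \<le> (x$k)\<^sup>2"
      by simp
    also have "\<dots> \<le> (\<Sum>k\<in>UNIV. (x$k)\<^sup>2)"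
      by (rule member_le_sum) auto
    finally show ?thesis .
  qed
qed

definition real_vec :: "int^'n \<Rightarrow> real^'n" where
  "real_vec x = (\<chi> k. real_of_int (x$k))"

lemma real_mat_mult_real_vec: "real_mat M *v real_vec x = real_vec (M *v x)"
  by (simp add: vec_eq_iff real_vec_def real_mat_def matrix_vector_mult_def)

lemma norm_real_vec: "norm (real_vec x) = sqrt (real_of_int (\<Sum>k\<in>UNIV. (x$k)\<^sup>2))"
  by (simp add: norm_eq_sqrt_inner inner_vec_def real_vec_def power2_eq_square)

lemma norm_real_vec_ge_1:
  assumes "x \<noteq> 0"
  shows "1 \<le> norm (real_vec x)"
proof -
  have "1 \<le> real_of_int (\<Sum>k\<in>UNIV. (x$k)\<^sup>2)"
    using sum_power2_ge_1[OF assms] by linarith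
  then show ?thesis by (simp add: norm_real_vec)
qed

lemma norm_real_vec_ge_sqrt2:
  assumes "x \<noteq> 0" "\<And>k. x \<noteq> axis k 1 \<and> x \<noteq> axis k (-1)"
  shows "sqrt 2 \<le> norm (real_vec x)"
proof -
  have "2 \<le> real_of_int (\<Sum>k\<in>UNIV. (x$k)\<^sup>2)"
    using sum_power2_ge_2[OF assms] by linarith
  then show ?thesis by (simp add: norm_real_vec)
qed

lemma norm_real_vec_axis_diff:
  assumes "i \<noteq> j"
  shows "norm (real_vec (axis i 1 - axis j 1 :: int^'n)) = sqrt 2"
proof -
  have "((axis i 1 - axis j 1 :: int^'n)$k)\<^sup>2 = of_bool (k = i) + of_bool (k = j)" for k
    using assms by (auto simp: axis_def)
  then show ?thesis
    by (simp add: norm_real_vec sum.distrib)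
qed

lemma abs_le_onorm_add_norm_div:
  fixes f :: "'a::real_normed_vector \<Rightarrow> 'a"
  assumes "bounded_linear f" "f v = c *\<^sub>R v + d" "v \<noteq> 0"
  shows "\<bar>c\<bar> \<le> onorm f + norm d / norm v"
proof -
  have "\<bar>c\<bar> * norm v = norm (f v - d)"
    using assms(2) by simp
  also have "\<dots> \<le> norm (f v) + norm d"
    by (rule norm_triangle_ineq4)
  also have "\<dots> \<le> onorm f * norm v + norm d"
    using onorm[OF assms(1)] by simp
  finally show ?thesis
    using assms(3) by (simp add: field_simps)
qed

lemma abs_le_op_norm_add:
  assumes "(M - mat \<mu>) *v x = d" "x \<noteq> 0"
  shows "\<bar>real_of_int \<mu>\<bar> \<le> op_norm M + norm (real_vec d) / norm (real_vec x)"
proof -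
  have "M *v x = \<mu> *s x + d"
    using assms(1) by (simp add: mat_mult_vector algebra_simps)
  then have "real_mat M *v real_vec x = real_of_int \<mu> *\<^sub>R real_vec x + real_vec d"
    unfolding real_mat_mult_real_vec by (simp add: vec_eq_iff real_vec_def)
  moreover have "real_vec x \<noteq> 0"
    using assms(2) by (auto simp: vec_eq_iff real_vec_def)
  ultimately show ?thesis
    unfolding op_norm_def by (intro abs_le_onorm_add_norm_div) auto
qed

theorem proposition3p3:
  fixes M :: "int^'n^'n" and \<mu> :: int
  assumes "collapsed \<mu> M"
  shows "\<bar>real_of_int \<mu>\<bar> \<le> op_norm M + sqrt 2 \<and>
         ((\<forall>k i j. i \<noteq> j \<longrightarrow> column k (M - mat \<mu>) \<noteq> axis i 1 - axis j 1)
           \<longrightarrow> \<bar>real_of_int \<mu>\<bar> \<le> op_norm M + 1)"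
proof -
  define A where "A = M - mat \<mu>"
  obtain i j x where "i \<noteq> j" "x \<noteq> 0" and Ax: "A *v x = axis i 1 - axis j 1"
    using collapsed_obtains_preimage_of_axis_diff[OF assms] unfolding A_def by blast
  have bound: "\<bar>real_of_int \<mu>\<bar> \<le> op_norm M + sqrt 2 / norm (real_vec x)"
    using abs_le_op_norm_add[OF Ax[unfolded A_def] \<open>x \<noteq> 0\<close>]
    by (simp add: norm_real_vec_axis_diff[OF \<open>i \<noteq> j\<close>])
  have "sqrt 2 / norm (real_vec x) \<le> sqrt 2"
    using norm_real_vec_ge_1[OF \<open>x \<noteq> 0\<close>] by (simp add: divide_le_eq)
  with bound have "\<bar>real_of_int \<mu>\<bar> \<le> op_norm M + sqrt 2"
    by linarith
  moreover have "\<bar>real_of_int \<mu>\<bar> \<le> op_norm M + 1"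
    if no_column: "\<forall>k i j. i \<noteq> j \<longrightarrow> column k A \<noteq> axis i 1 - axis j 1"
  proof -
    have "x \<noteq> axis k 1 \<and> x \<noteq> axis k (-1)" for k
      using column_eq_axis_diff_if_mult_unit[OF Ax, of k] no_column \<open>i \<noteq> j\<close> by metis
    then have "sqrt 2 / norm (real_vec x) \<le> 1"
      using norm_real_vec_ge_sqrt2[OF \<open>x \<noteq> 0\<close>] by (simp add: divide_le_eq)
    with bound show ?thesis by linarith
  qed
  ultimately show ?thesis
    unfolding A_def by blast
qed

end
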